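(* For $\xi>0$ and $w,z\in(-1,1)$ let \[ \Phi_{\mathbf 0}(\xi,w,z)=\frac{6}{\pi^2}\begin{cases}\Upsilon\Bigl(1+\frac{\xi^{-1}-\max(|w|,|z|)-1}{|w+z|}\Bigr) & \text{if } w+z\neq 0,\\ 0 & \text{if } w+z=0,\ \xi^{-1}<1+|w|,\\ 1 & \text{if } w+z=0,\ \xi^{-1}\ge 1+|w|,\end{cases} \] with $\Upsilon(x)=0$ for $x\le0$, $\Upsilon(x)=x$ for $0<x<1$, $\Upsilon(x)=1$ for $x\ge1$, and let $\Phi(\xi,w)=\int_\xi^\infty\int_{-1}^1\Phi_{\mathbf 0}(\eta,w,z)\,dz\,d\eta$. Then for $w\in(-1,1)$, \[ \Phi(\xi,w)=\begin{cases}1-\frac{12}{\pi^2}\xi & (\xi\le\frac12),\\[3pt] 1+\frac{6}{\pi^2}\bigl[F(\xi,w)-F(\tfrac12,w)-1\bigr] & (\frac12\le\xi\le\frac1{1+|w|}),\\[3pt] \frac{6}{\pi^2}\bigl[G(\xi,w)-G(\tfrac1{1-|w|},w)\bigr] & (\frac1{1+|w|}\le\xi\le\frac1{1-|w|}),\\[3pt] 0 & (\xi\ge\frac1{1-|w|}),\end{cases} \] where \[ F(\xi,w)=\Psi(\xi(1+|w|))+\Psi(\xi(1-|w|))-2\log\xi+2\Bigl(1+|w|\log\frac{1-|w|}{1+|w|}\Bigr)\xi, \] \[ G(\xi,w)=\Psi(\xi(1+|w|))-\log\xi+\Bigl(1-|w|+2|w|\log\frac{2|w|}{1+|w|}\Bigr)\xi,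 \] and, for $a>0$, \[ \Psi(a)=\begin{cases}-\operatorname{Li}_2(a)+(1-a)\log(a^{-1}-1)+\log a-\tfrac12(\log a)^2+\tfrac{\pi^2}{6} & (a<1),\\ \operatorname{Li}_2(a^{-1})-(a-1)\log(1-a^{-1})+\log a-\tfrac{\pi^2}{6} & (a>1),\end{cases} \] with $\operatorname{Li}_2(z)=\sum_{k\ge1}z^k/k^2$ for $|z|\le1$.
   Context: $\Psi$ is the solution on $a>0$ of $\Psi'(a)=(a^{-1}-1)\log|a^{-1}-1|$ with $\Psi(1)=0$. The function $\Phi(\xi,w)$ is the function such that the collision kernel from a generic initial point in the Boltzmann–Grad limit of the two-dimensional periodic Lorentz gas equals $\sigma\,\Phi(\xi,b)$, with $\sigma$ the scattering cross section and $b$ the impact parameter; the claim itself only concerns the explicitly defined functions above. *)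

theory Defs
  imports "HOL-Analysis.Analysis"
begin

definition Upsilon :: "real \<Rightarrow> real" where
  "Upsilon x = (if x \<le> 0 then 0 else if x < 1 then x else 1)"

definition Phi0 :: "real \<Rightarrow> real \<Rightarrow> real \<Rightarrow> real" where
  "Phi0 \<xi> w z = 6 / pi\<^sup>2 *
     (if w + z \<noteq> 0 then Upsilon (1 + (inverse \<xi> - max \<bar>w\<bar> \<bar>z\<bar> - 1) / \<bar>w + z\<bar>)
      else if inverse \<xi> < 1 + \<bar>w\<bar> then 0 else 1)"

definition Phi :: "real \<Rightarrow> real \<Rightarrow> real" where
  "Phi \<xi> w = (LBINT \<eta>:{\<xi>..}. (LBINT z:{-1..1}. Phi0 \<eta> w z))"

definition Li2 :: "real \<Rightarrow> real" where
  "Li2 z = (\<Sum>k. z ^ (Suc k) / (real (Suc k))\<^sup>2)"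

text \<open>Psi on a > 0; the value at a = 1 is Psi(1) = 0 (normalisation, continuous extension).\<close>
definition Psi :: "real \<Rightarrow> real" where
  "Psi a = (if a < 1 then - Li2 a + (1 - a) * ln (inverse a - 1) + ln a - (ln a)\<^sup>2 / 2 + pi\<^sup>2 / 6
            else if a > 1 then Li2 (inverse a) - (a - 1) * ln (1 - inverse a) + ln a - pi\<^sup>2 / 6
            else 0)"

definition F :: "real \<Rightarrow> real \<Rightarrow> real" where
  "F \<xi> w = Psi (\<xi> * (1 + \<bar>w\<bar>)) + Psi (\<xi> * (1 - \<bar>w\<bar>)) - 2 * ln \<xi>
     + 2 * (1 + \<bar>w\<bar> * ln ((1 - \<bar>w\<bar>) / (1 + \<bar>w\<bar>))) * \<xi>"

definition G :: "real \<Rightarrow> real \<Rightarrow> real" where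
  "G \<xi> w = Psi (\<xi> * (1 + \<bar>w\<bar>)) - ln \<xi>
     + (1 - \<bar>w\<bar> + 2 * \<bar>w\<bar> * ln (2 * \<bar>w\<bar> / (1 + \<bar>w\<bar>))) * \<xi>"

end

theory Submission
  imports Defs "HOL-Real_Asymp.Real_Asymp"
begin

text \<open>For \<open>s = \<eta>\<^sup>-\<^sup>1\<close> the integrand \<open>Phi0 \<eta> w z\<close> is, as a function of \<open>z\<close>, piecewise constant or of
  the form \<open>c / (\<bar>w\<bar> \<plusminus> z)\<close>, so its integral over \<open>z \<in> [-1, 1]\<close> is an elementary function
  \<open>J(\<bar>w\<bar>, s)\<close> (\<open>Phi0_core_integral\<close> below) with four regimes in \<open>s\<close>; it vanishes for
  \<open>\<eta> \<ge> 1 / (1 - \<bar>w\<bar>)\<close>. The outer integral is then computed from antiderivatives: by the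
  differential equation of \<open>\<Psi>\<close>, both \<open>F(\<cdot>, w)\<close> and \<open>G(\<cdot>, w)\<close> have derivative
  \<open>-J(\<bar>w\<bar>, 1/\<xi>)\<close> on their ranges. The pieces glue at
  \<open>\<xi> = 1 / (1 + \<bar>w\<bar>)\<close> because \<open>Li\<^sub>2\<close> cancels between \<open>\<Psi>(r)\<close> and \<open>\<Psi>(1/r)\<close>, while Euler's
  reflection formula \<open>Li\<^sub>2(p) + Li\<^sub>2(1 - p) = \<pi>\<^sup>2/6 - log p log(1 - p)\<close> evaluates \<open>\<Psi>(p) + \<Psi>(1 - p)\<close>.\<close>

section \<open>The dilogarithm\<close>

lemma Li2_zero: "Li2 0 = 0"
  by (simp add: Li2_def)

lemma Li2_one: "Li2 1 = pi\<^sup>2 / 6"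
  using inverse_squares_sums by (simp add: Li2_def sums_iff add.commute)

lemma continuous_on_Li2: "continuous_on {-1..1} Li2"
proof -
  have "uniform_limit {-1..1} (\<lambda>n x. \<Sum>k<n. x ^ Suc k / (real (Suc k))\<^sup>2) Li2 sequentially"
    unfolding Li2_def[abs_def]
  proof (rule Weierstrass_m_test)
    show "summable (\<lambda>k. 1 / (real (Suc k))\<^sup>2)"
      using inverse_squares_sums by (simp add: sums_iff)
    fix k :: nat and x :: real
    assume "x \<in> {-1..1}"
    then have "\<bar>x\<bar> ^ Suc k \<le> 1"
      by (intro power_le_one) auto
    then show "norm (x ^ Suc k / (real (Suc k))\<^sup>2) \<le> 1 / (real (Suc k))\<^sup>2"
      by (simp add: power_abs divide_right_mono del: of_nat_Suc power_Suc)
  qed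
  then show ?thesis
    by (rule uniform_limit_theorem[rotated]) (auto intro!: always_eventually continuous_intros)
qed

lemma sums_minus_ln_one_minus:
  fixes y :: real
  assumes "\<bar>y\<bar> < 1"
  shows "(\<lambda>n. y ^ Suc n / real (Suc n)) sums - ln (1 - y)"
proof -
  have "(\<lambda>n. - ((- (- y)) ^ n) / real n) sums ln (1 + - y)"
    by (rule ln_series') (use assms in simp)
  then have "(\<lambda>n. - (y ^ Suc n) / real (Suc n)) sums ln (1 - y)"
    by (subst sums_Suc_iff) simp
  from sums_minus[OF this] show ?thesis
    by simp
qed

lemma Li2_has_real_derivative:
  assumes "y \<noteq> 0" "\<bar>y\<bar> < 1"
  shows "(Li2 has_real_derivative - ln (1 - y) / y) (at y)"
proof -
  define c where "c n = 1 / (real (Suc n))\<^sup>2" for n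
  have Li2_eq: "Li2 = (\<lambda>x. \<Sum>n. c n * x ^ Suc n)"
    unfolding Li2_def c_def by (intro ext) simp
  have diff_series: "c n * real (Suc n) * x ^ n = x ^ n / real (Suc n)" for n x
    by (simp add: c_def power2_eq_square del: of_nat_Suc)
  have "summable (\<lambda>n. c n * real (Suc n) * x ^ n)" if "x \<in> {-1<..<1}" for x
  proof -
    have "summable (\<lambda>n. x ^ n / real (Suc n))"
    proof (rule summable_comparison_test')
      show "summable (\<lambda>n. \<bar>x\<bar> ^ n)"
        using that by (intro summable_geometric) auto
      show "norm (x ^ n / real (Suc n)) \<le> \<bar>x\<bar> ^ n" for n
        by (simp add: power_abs divide_le_eq mult_le_cancel_left1 del: of_nat_Suc)
    qed
    then show ?thesis
      by (simp only: diff_series)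
  qed
  then have "((\<lambda>x. \<Sum>n. c n * x ^ Suc n) has_real_derivative (\<Sum>n. c n * real (Suc n) * y ^ n)) (at y)"
    using assms by (intro DERIV_power_series'[where R = 1]) auto
  moreover have "(\<lambda>n. y ^ Suc n / real (Suc n) / y) sums (- ln (1 - y) / y)"
    by (rule sums_divide) (rule sums_minus_ln_one_minus[OF assms(2)])
  moreover have "y ^ Suc n / real (Suc n) / y = c n * real (Suc n) * y ^ n" for n
    using assms(1) by (simp add: c_def power2_eq_square field_simps del: of_nat_Suc)
  ultimately show ?thesis
    by (simp add: Li2_eq sums_iff)
qed

lemma Li2_has_real_derivative_comp [derivative_intros]:
  assumes "(g has_real_derivative g') (at x)" "g x \<noteq> 0" "\<bar>g x\<bar> < 1"
  shows "((\<lambda>x. Li2 (g x)) has_real_derivative (- ln (1 - g x) / g x * g')) (at x)"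
  using DERIV_chain2[OF Li2_has_real_derivative[OF assms(2,3)] assms(1)] .

text \<open>The left-hand side plus \<open>ln p * ln (1 - p)\<close> has derivative zero on \<open>]0, 1[\<close> and tends
  to \<open>Li2 1\<close> at \<open>1\<close>.\<close>
lemma Li2_reflection:
  assumes "0 < p" "p < 1"
  shows "Li2 p + Li2 (1 - p) = pi\<^sup>2 / 6 - ln p * ln (1 - p)"
proof -
  define g where "g x = Li2 x + Li2 (1 - x) + ln x * ln (1 - x)" for x
  have "continuous_on {p..1} Li2"
    using assms by (intro continuous_on_subset[OF continuous_on_Li2]) auto
  moreover have "continuous_on {p..1} (\<lambda>x. Li2 (1 - x))"
    using assms by (intro continuous_on_compose2[OF continuous_on_Li2] continuous_intros) auto
  moreover have "((\<lambda>x. ln x * ln (1 - x)) \<longlongrightarrow> 0) (at_left (1::real))"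
    by real_asymp
  ultimately have "(g \<longlongrightarrow> Li2 1 + Li2 (1 - 1) + 0) (at_left 1)"
    unfolding g_def[abs_def] using assms
    by (intro tendsto_add continuous_on_Icc_at_leftD) auto
  then have "(g \<longlongrightarrow> g 1) (at_left 1)"
    by (simp add: g_def)
  moreover have g_deriv: "(g has_real_derivative 0) (at x)" if "p \<le> x" "x < 1" for x
    unfolding g_def[abs_def] using that assms by (auto intro!: derivative_eq_intros)
  moreover have "(g \<longlongrightarrow> g x) (at x)" if "p \<le> x" "x < 1" for x
    using DERIV_isCont[OF g_deriv[OF that]] by (simp add: isCont_def)
  ultimately have "continuous_on {p..1} g"
    using assms by (intro continuous_on_IccI) (auto simp: filterlim_at_split)
  then have "g 1 = g p"
    using g_deriv assms by (intro DERIV_isconst_end) auto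
  then show ?thesis
    by (simp add: g_def Li2_one Li2_zero field_simps)
qed

section \<open>The function \<open>\<Psi>\<close>\<close>

definition Psi_small :: "real \<Rightarrow> real" where
  "Psi_small a = - Li2 a + (1 - a) * ln (inverse a - 1) + ln a - (ln a)\<^sup>2 / 2 + pi\<^sup>2 / 6"

definition Psi_large :: "real \<Rightarrow> real" where
  "Psi_large a = Li2 (inverse a) - (a - 1) * ln (1 - inverse a) + ln a - pi\<^sup>2 / 6"

lemma Psi_eq_Psi_small: "0 < a \<Longrightarrow> a < 1 \<Longrightarrow> Psi a = Psi_small a"
  by (simp add: Psi_def Psi_small_def)

lemma Psi_eq_Psi_large: "1 < a \<Longrightarrow> Psi a = Psi_large a"
  by (simp add: Psi_def Psi_large_def)

lemma Psi_one: "Psi 1 = 0"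
  by (simp add: Psi_def)

lemma Psi_small_has_real_derivative:
  assumes "0 < x" "x < 1"
  shows "(Psi_small has_real_derivative (1 / x - 1) * ln \<bar>1 / x - 1\<bar>) (at x)"
proof -
  have "inverse x - 1 = (1 - x) / x" "\<bar>1 / x - 1\<bar> = (1 - x) / x"
    using assms by (auto simp: field_simps)
  moreover have "ln ((1 - x) / x) = ln (1 - x) - ln x"
    using assms by (simp add: ln_div)
  ultimately show ?thesis
    unfolding Psi_small_def[abs_def] using assms
    by (auto intro!: derivative_eq_intros simp: inverse_eq_divide) (simp add: field_simps)
qed

lemma Psi_large_has_real_derivative:
  assumes "1 < x"
  shows "(Psi_large has_real_derivative (1 / x - 1) * ln \<bar>1 / x - 1\<bar>) (at x)"
proof -
  have "1 - inverse x = (x - 1) / x" "\<bar>1 / x - 1\<bar> = (x - 1) / x"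
    using assms by (auto simp: field_simps)
  moreover have "ln ((x - 1) / x) = ln (x - 1) - ln x"
    using assms by (simp add: ln_div)
  moreover have "0 < inverse x" "inverse x < 1"
    using assms by (auto simp: inverse_less_1_iff)
  ultimately show ?thesis
    unfolding Psi_large_def[abs_def] using assms
    by (auto intro!: derivative_eq_intros simp: inverse_eq_divide) (simp add: field_simps)
qed

lemma Psi_has_real_derivative:
  assumes "0 < x" "x \<noteq> 1"
  shows "(Psi has_real_derivative (1 / x - 1) * ln \<bar>1 / x - 1\<bar>) (at x)"
proof (cases "x < 1")
  case True
  with assms show ?thesis
    by (intro has_field_derivative_transform_within_open[OF Psi_small_has_real_derivative,
          of x "{0<..<1}"]) (auto simp: Psi_eq_Psi_small)
next
  case False
  with assms show ?thesis
    by (intro has_field_derivative_transform_within_open[OF Psi_large_has_real_derivative,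
          of x "{1<..}"]) (auto simp: Psi_eq_Psi_large)
qed

lemma Li2_tendsto_at_left_1: "(Li2 \<longlongrightarrow> pi\<^sup>2 / 6) (at_left 1)"
  using continuous_on_Icc_at_leftD[OF continuous_on_Li2] by (simp add: Li2_one)

lemma Psi_tendsto_at_left_1: "(Psi \<longlongrightarrow> 0) (at_left 1)"
proof -
  have "((\<lambda>x::real. (1 - x) * ln (inverse x - 1)) \<longlongrightarrow> 0) (at_left 1)"
       "((\<lambda>x::real. ln x) \<longlongrightarrow> 0) (at_left 1)"
       "((\<lambda>x::real. (ln x)\<^sup>2 / 2) \<longlongrightarrow> 0) (at_left 1)"
    by real_asymp+
  then have "(Psi_small \<longlongrightarrow> - (pi\<^sup>2 / 6) + 0 + 0 - 0 + pi\<^sup>2 / 6) (at_left 1)"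
    unfolding Psi_small_def[abs_def] by (intro tendsto_intros Li2_tendsto_at_left_1)
  moreover have "eventually (\<lambda>x. Psi_small x = Psi x) (at_left (1::real))"
    unfolding eventually_at_left_field by (intro exI[of _ 0]) (auto simp: Psi_eq_Psi_small)
  ultimately show ?thesis
    by (simp add: Lim_transform_eventually)
qed

lemma Psi_tendsto_at_right_1: "(Psi \<longlongrightarrow> 0) (at_right 1)"
proof -
  have "((\<lambda>x::real. (x - 1) * ln (1 - inverse x)) \<longlongrightarrow> 0) (at_right 1)"
       "((\<lambda>x::real. ln x) \<longlongrightarrow> 0) (at_right 1)"
       "filterlim (\<lambda>x::real. inverse x) (at_left 1) (at_right 1)"
    by real_asymp+
  moreover from this(3) have "((\<lambda>x. Li2 (inverse x)) \<longlongrightarrow> pi\<^sup>2 / 6) (at_right 1)"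
    by (rule filterlim_compose[OF Li2_tendsto_at_left_1])
  ultimately have "(Psi_large \<longlongrightarrow> pi\<^sup>2 / 6 - 0 + 0 - pi\<^sup>2 / 6) (at_right 1)"
    unfolding Psi_large_def[abs_def] by (intro tendsto_intros)
  moreover have "eventually (\<lambda>x. Psi_large x = Psi x) (at_right (1::real))"
    unfolding eventually_at_right_field by (intro exI[of _ 2]) (auto simp: Psi_eq_Psi_large)
  ultimately show ?thesis
    by (simp add: Lim_transform_eventually)
qed

lemma isCont_Psi: "0 < x \<Longrightarrow> isCont Psi x"
  using Psi_has_real_derivative[THEN DERIV_isCont] Psi_tendsto_at_left_1 Psi_tendsto_at_right_1
  by (cases "x = 1") (auto simp: isCont_def filterlim_at_split Psi_one)

lemma continuous_on_Psi: "continuous_on {0<..} Psi"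
  by (intro continuous_at_imp_continuous_on ballI isCont_Psi) auto

lemma Psi_mult_has_real_derivative:
  assumes "0 < c" "0 < x" "x * c \<noteq> 1"
  shows "((\<lambda>\<xi>. Psi (\<xi> * c)) has_real_derivative (inverse x - c) * (ln \<bar>inverse x - c\<bar> - ln c)) (at x)"
proof -
  have "((\<lambda>\<xi>. Psi (\<xi> * c)) has_real_derivative (1 / (x * c) - 1) * ln \<bar>1 / (x * c) - 1\<bar> * c) (at x)"
    using assms by (intro DERIV_chain2[OF Psi_has_real_derivative] derivative_eq_intros) auto
  moreover have "(1 / (x * c) - 1) * c = inverse x - c" "1 / (x * c) - 1 = (inverse x - c) / c"
    using assms by (auto simp: field_simps)
  moreover have "inverse x - c \<noteq> 0"
    using assms by (auto simp: field_simps)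
  ultimately show ?thesis
    using assms by (simp add: abs_div ln_div mult.commute mult.left_commute)
qed

lemma Psi_add_Psi_inverse:
  assumes "0 < r" "r < 1"
  shows "Psi r + Psi (inverse r) = (1 - r) * ln (inverse r - 1) - (inverse r - 1) * ln (1 - r) - (ln r)\<^sup>2 / 2"
proof -
  have "1 < inverse r"
    using assms by (simp add: one_less_inverse)
  then show ?thesis
    using assms by (simp add: Psi_eq_Psi_small Psi_eq_Psi_large Psi_small_def Psi_large_def ln_inverse)
qed

lemma Psi_add_Psi_one_minus:
  assumes "0 < p" "p < 1"
  shows "Psi p + Psi (1 - p) = pi\<^sup>2 / 6 + (1 - 2 * p) * (ln (1 - p) - ln p) + ln p + ln (1 - p)
           - (ln p - ln (1 - p))\<^sup>2 / 2"
proof -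
  have "inverse p - 1 = (1 - p) / p" "inverse (1 - p) - 1 = p / (1 - p)"
    using assms by (auto simp: field_simps)
  then have ln_eqs: "ln (inverse p - 1) = ln (1 - p) - ln p" "ln (inverse (1 - p) - 1) = ln p - ln (1 - p)"
    using assms by (auto simp: ln_div)
  have Li2_eq: "Li2 (1 - p) = pi\<^sup>2 / 6 - ln p * ln (1 - p) - Li2 p"
    using Li2_reflection[OF assms] by simp
  have Psi_eqs: "Psi p = Psi_small p" "Psi (1 - p) = Psi_small (1 - p)"
    using assms by (auto intro: Psi_eq_Psi_small)
  show ?thesis
    unfolding Psi_eqs Psi_small_def ln_eqs Li2_eq by (simp add: power2_eq_square field_simps)
qed

section \<open>The inner integral\<close>

lemma Upsilon_eq_0: "x \<le> 0 \<Longrightarrow> Upsilon x = 0"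
  by (simp add: Upsilon_def)

lemma Upsilon_eq_1: "1 \<le> x \<Longrightarrow> Upsilon x = 1"
  by (simp add: Upsilon_def)

lemma Upsilon_eq_self: "0 \<le> x \<Longrightarrow> x \<le> 1 \<Longrightarrow> Upsilon x = x"
  by (auto simp: Upsilon_def)

lemma Upsilon_measurable [measurable]: "Upsilon \<in> borel_measurable borel"
  unfolding Upsilon_def[abs_def] by measurable

definition Phi0_core :: "real \<Rightarrow> real \<Rightarrow> real \<Rightarrow> real" where
  "Phi0_core w s z = (if w + z \<noteq> 0 then Upsilon (1 + (s - max \<bar>w\<bar> \<bar>z\<bar> - 1) / \<bar>w + z\<bar>)
     else if s < 1 + \<bar>w\<bar> then 0 else 1)"

lemma Phi0_eq_Phi0_core: "Phi0 \<eta> w z = 6 / pi\<^sup>2 * Phi0_core w (inverse \<eta>) z"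
  by (simp add: Phi0_def Phi0_core_def)

lemma Phi0_core_nonneg: "0 \<le> Phi0_core w s z"
  by (simp add: Phi0_core_def Upsilon_def)

lemma Phi0_core_minus: "Phi0_core (- w) s (- z) = Phi0_core w s z"
proof -
  have "\<bar>- w - z\<bar> = \<bar>w + z\<bar>"
    by linarith
  then show ?thesis
    by (simp add: Phi0_core_def)
qed

lemma Phi0_core_eq_1:
  assumes "1 + max \<bar>w\<bar> \<bar>z\<bar> \<le> s"
  shows "Phi0_core w s z = 1"
proof (cases "w + z = 0")
  case True
  then have "\<bar>z\<bar> = \<bar>w\<bar>"
    by auto
  with True assms show ?thesis
    by (simp add: Phi0_core_def)
next
  case False
  have "0 \<le> (s - max \<bar>w\<bar> \<bar>z\<bar> - 1) / \<bar>w + z\<bar>"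
    using assms by (intro divide_nonneg_nonneg) auto
  with False show ?thesis
    by (simp add: Phi0_core_def Upsilon_eq_1)
qed

lemma Phi0_core_eq_0:
  assumes "s + \<bar>w + z\<bar> \<le> 1 + max \<bar>w\<bar> \<bar>z\<bar>" "s < 1 + \<bar>w\<bar>"
  shows "Phi0_core w s z = 0"
proof (cases "w + z = 0")
  case False
  then have "(s - max \<bar>w\<bar> \<bar>z\<bar> - 1) / \<bar>w + z\<bar> \<le> - \<bar>w + z\<bar> / \<bar>w + z\<bar>"
    using assms by (intro divide_right_mono) auto
  with False show ?thesis
    by (simp add: Phi0_core_def Upsilon_eq_0)
qed (use assms in \<open>simp add: Phi0_core_def\<close>)

lemma Phi0_core_eq_Upsilon_arg:
  assumes "w + z \<noteq> 0" "0 \<le> x" "x \<le> 1" "x = 1 + (s - max \<bar>w\<bar> \<bar>z\<bar> - 1) / \<bar>w + z\<bar>"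
  shows "Phi0_core w s z = x"
  using assms by (simp add: Phi0_core_def Upsilon_eq_self)

lemma Phi0_core_right:
  assumes "0 \<le> a" "a \<le> z" "0 < a + z" "1 - a \<le> s" "s - 1 \<le> z"
  shows "Phi0_core a s z = (a + s - 1) / (a + z)"
proof (rule Phi0_core_eq_Upsilon_arg)
  have "max \<bar>a\<bar> \<bar>z\<bar> = z" "\<bar>a + z\<bar> = a + z"
    using assms by auto
  then show "(a + s - 1) / (a + z) = 1 + (s - max \<bar>a\<bar> \<bar>z\<bar> - 1) / \<bar>a + z\<bar>"
    using assms by (simp add: field_simps)
  show "0 \<le> (a + s - 1) / (a + z)" "(a + s - 1) / (a + z) \<le> 1"
    using assms by simp_all
qed (use assms in simp)

lemma Phi0_core_left:
  assumes "0 \<le> a" "1 + a \<le> s" "z < 1 - s"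
  shows "Phi0_core a s z = (s - 1 - a) / (- z - a)"
proof (rule Phi0_core_eq_Upsilon_arg)
  have "max \<bar>a\<bar> \<bar>z\<bar> = - z" "\<bar>a + z\<bar> = - z - a"
    using assms by auto
  then show "(s - 1 - a) / (- z - a) = 1 + (s - max \<bar>a\<bar> \<bar>z\<bar> - 1) / \<bar>a + z\<bar>"
    using assms by (simp add: field_simps)
  show "0 \<le> (s - 1 - a) / (- z - a)" "(s - 1 - a) / (- z - a) \<le> 1"
    using assms by simp_all
qed (use assms in simp)

lemma Phi0_core_middle:
  assumes "z \<le> a" "1 - s \<le> z" "s < 1 + a"
  shows "Phi0_core a s z = (z + s - 1) / (a + z)"
proof (rule Phi0_core_eq_Upsilon_arg)
  have "max \<bar>a\<bar> \<bar>z\<bar> = a" "\<bar>a + z\<bar> = a + z"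
    using assms by auto
  then show "(z + s - 1) / (a + z) = 1 + (s - max \<bar>a\<bar> \<bar>z\<bar> - 1) / \<bar>a + z\<bar>"
    using assms by (simp add: field_simps)
  show "0 \<le> (z + s - 1) / (a + z)" "(z + s - 1) / (a + z) \<le> 1"
    using assms by simp_all
qed (use assms in simp)

lemma has_integral_interior_antiderivative:
  fixes f g H :: "real \<Rightarrow> real"
  assumes "u \<le> v" "continuous_on {u..v} H"
    and "\<And>x. u < x \<Longrightarrow> x < v \<Longrightarrow> (H has_real_derivative g x) (at x)"
    and "\<And>x. u < x \<Longrightarrow> x < v \<Longrightarrow> g x = f x"
  shows "(f has_integral H v - H u) {u..v}"
proof -
  have "(g has_integral H v - H u) {u..v}"
    using assms(1-3)
    by (intro fundamental_theorem_of_calculus_interior)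
       (auto simp: has_real_derivative_iff_has_vector_derivative[symmetric])
  then show ?thesis
    using assms(4) has_integral_spike_finite_eq[of "{u, v}" "{u..v}" g f] by auto
qed

lemma continuous_on_const_mult_ln:
  fixes h :: "real \<Rightarrow> real"
  assumes "k = 0 \<or> (\<forall>x\<in>S. 0 < h x)" "continuous_on S h"
  shows "continuous_on S (\<lambda>x. k * ln (h x))"
  using assms by (cases "k = 0") (auto intro!: continuous_intros continuous_on_ln)

text \<open>On the boundaries of the regimes some logarithms are taken at \<open>0\<close>, always with factor \<open>0\<close>.\<close>
definition Phi0_core_integral :: "real \<Rightarrow> real \<Rightarrow> real" where
  "Phi0_core_integral a s =
     (if 2 \<le> s then 2
      else if 1 + a \<le> s then 2 * (s - 1) + (a + s - 1) * (ln (1 + a) - ln (a + s - 1))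
        + (s - 1 - a) * (ln (1 - a) - ln (s - 1 - a))
      else if 1 - a \<le> s then (a + s - 1) - (1 + a - s) * (ln (2 * a) - ln (1 + a - s))
        + (a + s - 1) * (ln (1 + a) - ln (2 * a))
      else 0)"

lemma has_integral_Phi0_core_ge_2:
  assumes "0 \<le> a" "a < 1" "2 \<le> s"
  shows "(Phi0_core a s has_integral 2) {-1..1}"
proof -
  have "((\<lambda>_. 1::real) has_integral 2) {-1..1::real}"
    using has_integral_const_real[of "1::real" "-1" 1] by simp
  moreover have "Phi0_core a s z = 1" if "z \<in> {-1..1}" for z
  proof (rule Phi0_core_eq_1)
    have "\<bar>z\<bar> \<le> 1" "\<bar>a\<bar> \<le> 1"
      using that assms by auto
    then show "1 + max \<bar>a\<bar> \<bar>z\<bar> \<le> s"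
      using assms by linarith
  qed
  ultimately show ?thesis
    using has_integral_cong by metis
qed

lemma has_integral_Phi0_core_lt_1_minus:
  assumes "0 \<le> a" "s < 1 - a"
  shows "(Phi0_core a s has_integral 0) {-1..1}"
proof -
  have "Phi0_core a s z = 0" if "z \<in> {-1..1}" for z
  proof (rule Phi0_core_eq_0)
    have "\<bar>a + z\<bar> \<le> a + \<bar>z\<bar>" "\<bar>z\<bar> \<le> max \<bar>a\<bar> \<bar>z\<bar>"
      using assms by auto
    then show "s + \<bar>a + z\<bar> \<le> 1 + max \<bar>a\<bar> \<bar>z\<bar>"
      using assms by linarith
  qed (use assms in simp)
  then show ?thesis
    using has_integral_0 has_integral_cong by metis
qed

lemma has_integral_Phi0_core_ge_1_plus:
  assumes "0 \<le> a" "a < 1" "1 + a \<le> s" "s < 2"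
  shows "(Phi0_core a s has_integral Phi0_core_integral a s) {-1..1}"
proof -
  define t where "t = s - 1"
  have t: "0 \<le> t" "a \<le> t" "t < 1"
    using assms by (auto simp: t_def)
  define H1 where "H1 z = - (t - a) * ln (- z - a)" for z
  define H3 where "H3 z = (a + t) * ln (a + z)" for z
  have "(Phi0_core a s has_integral H1 (-t) - H1 (-1)) {-1..-t}"
  proof (rule has_integral_interior_antiderivative)
    show "continuous_on {-1..-t} H1"
      unfolding H1_def using t by (intro continuous_on_const_mult_ln continuous_intros) auto
    fix x assume x: "-1 < x" "x < -t"
    show "(H1 has_real_derivative (t - a) / (- x - a)) (at x)"
    proof -
      have "0 < - x - a"
        using x t by linarith
      then show ?thesis
        unfolding H1_def[abs_def] by (auto intro!: derivative_eq_intros simp: divide_simps)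
    qed
    show "(t - a) / (- x - a) = Phi0_core a s x"
      using x assms by (simp add: Phi0_core_left t_def)
  qed (use t in auto)
  moreover have "(Phi0_core a s has_integral t - (- t)) {-t..t}"
  proof (rule has_integral_interior_antiderivative)
    fix x assume x: "-t < x" "x < t"
    show "1 = Phi0_core a s x"
      using x assms by (intro Phi0_core_eq_1[symmetric]) (auto simp: t_def)
  qed (use t in \<open>auto intro!: derivative_eq_intros continuous_intros\<close>)
  moreover have "(Phi0_core a s has_integral H3 1 - H3 t) {t..1}"
  proof (rule has_integral_interior_antiderivative)
    have "a + t = 0 \<or> (\<forall>z\<in>{t..1}. 0 < a + z)"
      using t assms(1) by (cases "a + t = 0") auto
    then show "continuous_on {t..1} H3"
      unfolding H3_def by (intro continuous_on_const_mult_ln continuous_intros)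
    fix x assume x: "t < x" "x < 1"
    show "(H3 has_real_derivative (a + t) / (a + x)) (at x)"
      unfolding H3_def[abs_def] using x t assms(1) by (auto intro!: derivative_eq_intros)
    show "(a + t) / (a + x) = Phi0_core a s x"
      using x assms t by (simp add: Phi0_core_right t_def)
  qed (use t in auto)
  ultimately have "(Phi0_core a s has_integral (H1 (-t) - H1 (-1)) + (t - - t) + (H3 1 - H3 t)) {-1..1}"
    using t by (intro has_integral_combine) auto
  then show ?thesis
    using assms by (simp add: Phi0_core_integral_def H1_def H3_def t_def algebra_simps)
qed

lemma has_integral_Phi0_core_ge_1_minus:
  assumes "0 < a" "a < 1" "1 - a \<le> s" "s < 1 + a"
  shows "(Phi0_core a s has_integral Phi0_core_integral a s) {-1..1}"
proof -
  define t where "t = s - 1"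
  have t: "- a \<le> t" "t < a"
    using assms by (auto simp: t_def)
  define H2 where "H2 z = z - (a - t) * ln (a + z)" for z
  define H3 where "H3 z = (a + t) * ln (a + z)" for z
  have "Phi0_core a s z = 0" if "z \<in> {-1..-t}" for z
  proof (rule Phi0_core_eq_0)
    have "\<bar>z\<bar> \<le> max \<bar>a\<bar> \<bar>z\<bar>" "\<bar>a\<bar> \<le> max \<bar>a\<bar> \<bar>z\<bar>" "\<bar>a\<bar> = a"
      using assms by auto
    then show "s + \<bar>a + z\<bar> \<le> 1 + max \<bar>a\<bar> \<bar>z\<bar>"
      using that assms by (cases "z \<le> - a") (auto simp: t_def)
  qed (use assms in simp)
  then have "(Phi0_core a s has_integral 0) {-1..-t}"
    using has_integral_0 has_integral_cong by metis
  moreover have "(Phi0_core a s has_integral H2 a - H2 (-t)) {-t..a}"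
  proof (rule has_integral_interior_antiderivative)
    show "continuous_on {-t..a} H2"
      unfolding H2_def using t by (auto intro!: continuous_intros)
    fix x assume x: "-t < x" "x < a"
    then have "0 < a + x"
      using t by linarith
    then show "(H2 has_real_derivative 1 - (a - t) / (a + x)) (at x)"
      unfolding H2_def[abs_def] by (auto intro!: derivative_eq_intros)
    have "Phi0_core a s x = (x + t) / (a + x)"
      using x assms by (simp add: Phi0_core_middle t_def)
    with \<open>0 < a + x\<close> show "1 - (a - t) / (a + x) = Phi0_core a s x"
      by (simp add: field_simps)
  qed (use t in auto)
  moreover have "(Phi0_core a s has_integral H3 1 - H3 a) {a..1}"
  proof (rule has_integral_interior_antiderivative)
    show "continuous_on {a..1} H3"
      unfolding H3_def using assms by (auto intro!: continuous_intros)
    fix x assume x: "a < x" "x < 1"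
    show "(H3 has_real_derivative (a + t) / (a + x)) (at x)"
      unfolding H3_def[abs_def] using x assms by (auto intro!: derivative_eq_intros)
    show "(a + t) / (a + x) = Phi0_core a s x"
      using x assms t by (simp add: Phi0_core_right t_def)
  qed (use assms in auto)
  ultimately have "(Phi0_core a s has_integral 0 + (H2 a - H2 (-t)) + (H3 1 - H3 a)) {-1..1}"
    using t assms by (intro has_integral_combine) auto
  then show ?thesis
    using assms by (simp add: Phi0_core_integral_def H2_def H3_def t_def algebra_simps)
qed

lemma has_integral_Phi0_core:
  assumes "0 \<le> a" "a < 1"
  shows "(Phi0_core a s has_integral Phi0_core_integral a s) {-1..1}"
proof -
  consider "2 \<le> s" | "1 + a \<le> s" "s < 2" | "0 < a" "1 - a \<le> s" "s < 1 + a" | "s < 1 - a"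
    using assms by force
  then show ?thesis
  proof cases
    case 1
    then show ?thesis
      using has_integral_Phi0_core_ge_2[OF assms] by (simp add: Phi0_core_integral_def)
  next
    case 2
    then show ?thesis
      using has_integral_Phi0_core_ge_1_plus[OF assms] by simp
  next
    case 3
    then show ?thesis
      using assms by (intro has_integral_Phi0_core_ge_1_minus) auto
  next
    case 4
    then show ?thesis
      using has_integral_Phi0_core_lt_1_minus[OF assms(1)] assms by (simp add: Phi0_core_integral_def)
  qed
qed

lemma has_integral_Phi0_core_abs:
  assumes "\<bar>w\<bar> < 1"
  shows "(Phi0_core w s has_integral Phi0_core_integral \<bar>w\<bar> s) {-1..1}"
proof (cases "0 \<le> w")
  case True
  then show ?thesis
    using has_integral_Phi0_core[of w] assms by simp
next
  case False
  have "((\<lambda>z. Phi0_core \<bar>w\<bar> s (- z)) has_integral Phi0_core_integral \<bar>w\<bar> s) {-1..- (-1)}"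
    using has_integral_Phi0_core[of "\<bar>w\<bar>"] assms by (subst has_integral_reflect_real) simp
  moreover have "Phi0_core \<bar>w\<bar> s (- z) = Phi0_core w s z" for z
    using False Phi0_core_minus[of w s z] by simp
  ultimately show ?thesis
    by simp
qed

lemma Phi0_core_integral_nonneg:
  assumes "0 \<le> a" "a < 1"
  shows "0 \<le> Phi0_core_integral a s"
  using has_integral_Phi0_core[OF assms] Phi0_core_nonneg by (rule has_integral_nonneg)

lemma Phi0_core_integral_eq_0:
  assumes "0 \<le> a" "s \<le> 1 - a"
  shows "Phi0_core_integral a s = 0"
  using assms by (cases "a = 0") (auto simp: Phi0_core_integral_def)

section \<open>The outer integral\<close>

lemma set_borel_integral_eq_has_integral_nonneg:
  fixes f :: "real \<Rightarrow> real"
  assumes "(f has_integral I) S" "\<And>x. x \<in> S \<Longrightarrow> 0 \<le> f x"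
    and "f \<in> borel_measurable borel" "S \<in> sets borel"
  shows "(LBINT x:S. f x) = I"
proof -
  have "f absolutely_integrable_on S"
    using assms(1,2) by (intro nonnegative_absolutely_integrable_1) (auto simp: integrable_on_def)
  then have "(LINT x:S|lebesgue. f x) = I"
    using assms(1) by (simp add: set_lebesgue_integral_eq_integral(2) integral_unique)
  moreover have "(\<lambda>x. indicator S x *\<^sub>R f x) \<in> borel_measurable lborel"
    using assms(3,4) by measurable
  ultimately show ?thesis
    unfolding set_lebesgue_integral_def by (simp add: integral_completion)
qed

lemma LBINT_Phi0:
  assumes "\<bar>w\<bar> < 1"
  shows "(LBINT z:{-1..1}. Phi0 \<eta> w z) = 6 / pi\<^sup>2 * Phi0_core_integral \<bar>w\<bar> (inverse \<eta>)"
proof (rule set_borel_integral_eq_has_integral_nonneg)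
  show "(Phi0 \<eta> w has_integral 6 / pi\<^sup>2 * Phi0_core_integral \<bar>w\<bar> (inverse \<eta>)) {-1..1}"
    unfolding Phi0_eq_Phi0_core[abs_def]
    by (intro has_integral_mult_right has_integral_Phi0_core_abs assms)
  show "0 \<le> Phi0 \<eta> w z" for z
    by (simp add: Phi0_eq_Phi0_core Phi0_core_nonneg)
  show "Phi0 \<eta> w \<in> borel_measurable borel"
    unfolding Phi0_def by measurable
qed simp

lemma Phi0_core_integral_inverse_eq_0:
  assumes "0 \<le> a" "a < 1" "1 / (1 - a) \<le> \<eta>"
  shows "Phi0_core_integral a (inverse \<eta>) = 0"
proof (rule Phi0_core_integral_eq_0)
  have "inverse \<eta> \<le> inverse (1 / (1 - a))"
    using assms by (intro le_imp_inverse_le) auto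
  then show "inverse \<eta> \<le> 1 - a"
    by simp
qed (use assms in simp)

lemma Phi_eq_tail_integral:
  assumes "\<bar>w\<bar> < 1" "\<xi> \<le> 1 / (1 - \<bar>w\<bar>)"
    and "((\<lambda>\<eta>. Phi0_core_integral \<bar>w\<bar> (inverse \<eta>)) has_integral V) {\<xi>..1 / (1 - \<bar>w\<bar>)}"
  shows "Phi \<xi> w = 6 / pi\<^sup>2 * V"
proof -
  define T where "T = 1 / (1 - \<bar>w\<bar>)"
  define K where "K \<eta> = 6 / pi\<^sup>2 * Phi0_core_integral \<bar>w\<bar> (inverse \<eta>)" for \<eta>
  have "Phi \<xi> w = (LBINT \<eta>:{\<xi>..}. K \<eta>)"
    unfolding Phi_def K_def using assms(1) by (simp add: LBINT_Phi0)
  also have "\<dots> = (LBINT \<eta>:{\<xi>..T}. K \<eta>)"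
  proof -
    have "K \<eta> = 0" if "T < \<eta>" for \<eta>
      using that assms(1) by (simp add: K_def T_def Phi0_core_integral_inverse_eq_0)
    then have "(\<lambda>\<eta>. indicator {\<xi>..} \<eta> *\<^sub>R K \<eta>) = (\<lambda>\<eta>. indicator {\<xi>..T} \<eta> *\<^sub>R K \<eta>)"
      by (intro ext) (auto simp: indicator_def not_le)
    then show ?thesis
      unfolding set_lebesgue_integral_def by (simp only:)
  qed
  also have "\<dots> = 6 / pi\<^sup>2 * V"
  proof (rule set_borel_integral_eq_has_integral_nonneg)
    show "(K has_integral 6 / pi\<^sup>2 * V) {\<xi>..T}"
      unfolding K_def[abs_def] T_def by (intro has_integral_mult_right assms(3))
    show "0 \<le> K \<eta>" for \<eta>
      using assms(1) by (simp add: K_def Phi0_core_integral_nonneg)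
    show "K \<in> borel_measurable borel"
      unfolding K_def[abs_def] Phi0_core_integral_def by measurable
  qed simp
  finally show ?thesis .
qed

lemma Phi_eq_0:
  assumes "\<bar>w\<bar> < 1" "1 / (1 - \<bar>w\<bar>) \<le> \<xi>"
  shows "Phi \<xi> w = 0"
proof -
  have "(LBINT z:{-1..1}. Phi0 \<eta> w z) = 0" if "\<xi> \<le> \<eta>" for \<eta>
    using that assms by (simp add: LBINT_Phi0 Phi0_core_integral_inverse_eq_0)
  then have "Phi \<xi> w = (LBINT \<eta>:{\<xi>..}. (0::real))"
    unfolding Phi_def by (intro set_lebesgue_integral_cong) auto
  then show ?thesis
    by simp
qed

lemma F_has_real_derivative:
  assumes "0 \<le> a" "1 / 2 < x" "x < 1 / (1 + a)"
  shows "((\<lambda>\<xi>. F \<xi> a) has_real_derivative - Phi0_core_integral a (inverse x)) (at x)"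
proof -
  define s where "s = inverse x"
  have s: "1 + a < s" "s < 2" and x: "0 < x"
    using assms by (auto simp: s_def field_simps)
  have "1 / 2 < 1 / (1 + a)"
    using assms by linarith
  then have "a < 1"
    using assms(1) by (simp add: field_simps)
  have "x * (1 + a) < 1"
    using assms by (simp add: field_simps)
  moreover have "x * (1 - a) \<le> x * (1 + a)"
    using assms x by (intro mult_left_mono) auto
  ultimately have "x * (1 - a) \<noteq> 1" "x * (1 + a) \<noteq> 1"
    by linarith+
  with assms x \<open>a < 1\<close> have "((\<lambda>\<xi>. F \<xi> a) has_real_derivative
      (s - (1 + a)) * (ln \<bar>s - (1 + a)\<bar> - ln (1 + a)) + (s - (1 - a)) * (ln \<bar>s - (1 - a)\<bar> - ln (1 - a))
      - 2 * s + 2 * (1 + a * ln ((1 - a) / (1 + a)))) (at x)" (is "(_ has_real_derivative ?D) _")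
    unfolding F_def s_def
    by (auto intro!: derivative_eq_intros Psi_mult_has_real_derivative simp: inverse_eq_divide)
  moreover have "?D = - Phi0_core_integral a s"
    using s assms by (simp add: Phi0_core_integral_def ln_div algebra_simps)
  ultimately show ?thesis
    by (simp add: s_def)
qed

lemma G_has_real_derivative:
  assumes "0 \<le> a" "1 / (1 + a) < x" "x < 1 / (1 - a)"
  shows "((\<lambda>\<xi>. G \<xi> a) has_real_derivative - Phi0_core_integral a (inverse x)) (at x)"
proof -
  define s where "s = inverse x"
  have "0 < 1 / (1 + a)"
    using assms by simp
  then have x: "0 < x"
    using assms by linarith
  have a: "0 < a"
    using assms by (cases "a = 0") auto
  have a1: "a < 1"
  proof (rule ccontr)
    assume "\<not> a < 1"
    then have "1 / (1 - a) \<le> 0"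
      by (intro divide_nonneg_nonpos) auto
    with assms x show False
      by linarith
  qed
  have s: "1 - a < s" "s < 1 + a"
    using assms x a1 by (auto simp: s_def field_simps)
  have "x * (1 + a) \<noteq> 1"
    using assms by (auto simp: field_simps)
  with assms x have "((\<lambda>\<xi>. G \<xi> a) has_real_derivative
      (s - (1 + a)) * (ln \<bar>s - (1 + a)\<bar> - ln (1 + a)) - s + (1 - a + 2 * a * ln (2 * a / (1 + a)))) (at x)"
    (is "(_ has_real_derivative ?D) _")
    unfolding G_def s_def
    by (auto intro!: derivative_eq_intros Psi_mult_has_real_derivative simp: inverse_eq_divide)
  moreover have "?D = - Phi0_core_integral a s"
    using s a a1 by (simp add: Phi0_core_integral_def ln_div ln_mult algebra_simps)
  ultimately show ?thesis
    by (simp add: s_def)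
qed

lemma F_half:
  assumes "0 \<le> a" "a < 1"
  shows "F (1 / 2) a = pi\<^sup>2 / 6 + 1 + ln (1 + a) + ln (1 - a) - (ln (1 + a) - ln (1 - a))\<^sup>2 / 2"
proof -
  define p where "p = (1 + a) / 2"
  have p: "0 < p" "p < 1" "1 / 2 * (1 + a) = p" "1 / 2 * (1 - a) = 1 - p" "1 - 2 * p = - a"
    using assms by (auto simp: p_def field_simps)
  have ln_eqs: "ln p = ln (1 + a) - ln 2" "ln (1 - p) = ln (1 - a) - ln 2"
      "ln ((1 - a) / (1 + a)) = ln (1 - a) - ln (1 + a)" "ln (1 / 2 :: real) = - ln 2"
    using assms by (auto simp: p_def ln_div field_simps)
  have "Psi (1 - p) = pi\<^sup>2 / 6 - a * (ln (1 - a) - ln (1 + a)) + ln (1 + a) + ln (1 - a) - 2 * ln 2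
      - (ln (1 + a) - ln (1 - a))\<^sup>2 / 2 - Psi p"
    using Psi_add_Psi_one_minus[OF p(1,2)] unfolding ln_eqs p(5) by (simp add: algebra_simps)
  then show ?thesis
    unfolding F_def abs_of_nonneg[OF assms(1)] p(3,4) ln_eqs by (simp add: algebra_simps)
qed

lemma F_G_glue:
  assumes "0 \<le> a" "a < 1"
  shows "pi\<^sup>2 / 6 - 1 + F (1 / (1 + a)) a - F (1 / 2) a = G (1 / (1 + a)) a - G (1 / (1 - a)) a"
proof (cases "a = 0")
  case True
  then show ?thesis
    using F_half[OF assms] by (simp add: F_def Psi_one)
next
  case False
  with assms have a: "0 < a" "a < 1"
    by auto
  define r where "r = (1 - a) / (1 + a)"
  have r: "0 < r" "r < 1" "1 / (1 + a) * (1 - a) = r" "1 / (1 - a) * (1 + a) = inverse r"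
    using a by (auto simp: r_def)
  have r_eqs: "1 - r = 2 * a / (1 + a)" "inverse r - 1 = 2 * a / (1 - a)"
    using a by (auto simp: r_def field_simps)
  have ln_eqs: "ln r = ln (1 - a) - ln (1 + a)"
      "ln (2 * a / (1 - a)) = ln 2 + ln a - ln (1 - a)" "ln (2 * a / (1 + a)) = ln 2 + ln a - ln (1 + a)"
      "ln (1 / (1 + a)) = - ln (1 + a)" "ln (1 / (1 - a)) = - ln (1 - a)"
    using a by (auto simp: r_def ln_div ln_mult)
  define K where "K = 1 - a + 2 * a * ln (2 * a / (1 + a))"
  have Fb: "F (1 / (1 + a)) a = Psi r + 2 * ln (1 + a) + 2 * (1 + a * ln r) / (1 + a)"
    using a unfolding F_def r(3) by (simp add: r_def Psi_one ln_eqs)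
  have Gb: "G (1 / (1 + a)) a = ln (1 + a) + K / (1 + a)"
    using a unfolding G_def K_def by (simp add: Psi_one ln_eqs)
  have GT: "G (1 / (1 - a)) a = Psi (inverse r) + ln (1 - a) + K / (1 - a)"
    using a unfolding G_def K_def by (simp add: r_def ln_eqs)
  have Psi_inverse:
      "Psi (inverse r) = (1 - r) * ln (inverse r - 1) - (inverse r - 1) * ln (1 - r) - (ln r)\<^sup>2 / 2 - Psi r"
    using Psi_add_Psi_inverse[OF r(1,2)] by simp
  show ?thesis
    unfolding Fb Gb GT Psi_inverse F_half[OF assms] K_def ln_eqs r_eqs
    using a by (simp add: power2_eq_square divide_simps) (simp add: algebra_simps)
qed

lemma continuous_on_G:
  assumes "0 < u"
  shows "continuous_on {u..v} (\<lambda>\<xi>. G \<xi> a)"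
  unfolding G_def using assms
  by (intro continuous_intros continuous_on_compose2[OF continuous_on_Psi]) auto

lemma continuous_on_F:
  assumes "0 < u" "\<bar>a\<bar> < 1"
  shows "continuous_on {u..v} (\<lambda>\<xi>. F \<xi> a)"
  unfolding F_def using assms
  by (intro continuous_intros continuous_on_compose2[OF continuous_on_Psi]) auto

lemma has_integral_tail_G:
  assumes "0 \<le> a" "a < 1" "1 / (1 + a) \<le> \<xi>" "\<xi> \<le> 1 / (1 - a)"
  shows "((\<lambda>\<eta>. Phi0_core_integral a (inverse \<eta>)) has_integral G \<xi> a - G (1 / (1 - a)) a)
           {\<xi>..1 / (1 - a)}"
proof -
  have "0 < 1 / (1 + a)"
    using assms by simp
  then have "0 < \<xi>"
    using assms by linarith
  have "((\<lambda>\<eta>. Phi0_core_integral a (inverse \<eta>)) has_integral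
      (- G (1 / (1 - a)) a) - (- G \<xi> a)) {\<xi>..1 / (1 - a)}"
  proof (rule has_integral_interior_antiderivative)
    show "continuous_on {\<xi>..1 / (1 - a)} (\<lambda>\<eta>. - G \<eta> a)"
      using \<open>0 < \<xi>\<close> by (intro continuous_intros continuous_on_G)
    fix x assume "\<xi> < x" "x < 1 / (1 - a)"
    then show "((\<lambda>\<eta>. - G \<eta> a) has_real_derivative - (- Phi0_core_integral a (inverse x))) (at x)"
      using assms by (intro DERIV_minus G_has_real_derivative) auto
  qed (use assms in auto)
  then show ?thesis
    by simp
qed

lemma has_integral_tail_F:
  assumes "0 \<le> a" "a < 1" "1 / 2 \<le> \<xi>" "\<xi> \<le> 1 / (1 + a)"
  shows "((\<lambda>\<eta>. Phi0_core_integral a (inverse \<eta>)) has_integral pi\<^sup>2 / 6 - 1 + F \<xi> a - F (1 / 2) a)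
           {\<xi>..1 / (1 - a)}"
proof -
  have "((\<lambda>\<eta>. Phi0_core_integral a (inverse \<eta>)) has_integral
      (- F (1 / (1 + a)) a) - (- F \<xi> a)) {\<xi>..1 / (1 + a)}"
  proof (rule has_integral_interior_antiderivative)
    show "continuous_on {\<xi>..1 / (1 + a)} (\<lambda>\<eta>. - F \<eta> a)"
      using assms by (intro continuous_intros continuous_on_F) auto
    fix x assume "\<xi> < x" "x < 1 / (1 + a)"
    then show "((\<lambda>\<eta>. - F \<eta> a) has_real_derivative - (- Phi0_core_integral a (inverse x))) (at x)"
      using assms by (intro DERIV_minus F_has_real_derivative) auto
  qed (use assms in auto)
  moreover have "1 / (1 + a) \<le> 1 / (1 - a)"
    using assms by (intro divide_left_mono) auto
  ultimately have "((\<lambda>\<eta>. Phi0_core_integral a (inverse \<eta>)) has_integral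
      (F \<xi> a - F (1 / (1 + a)) a) + (G (1 / (1 + a)) a - G (1 / (1 - a)) a)) {\<xi>..1 / (1 - a)}"
    using assms has_integral_tail_G[of a "1 / (1 + a)"] by (intro has_integral_combine) auto
  moreover have "(F \<xi> a - F (1 / (1 + a)) a) + (G (1 / (1 + a)) a - G (1 / (1 - a)) a)
      = pi\<^sup>2 / 6 - 1 + F \<xi> a - F (1 / 2) a"
    using F_G_glue[OF assms(1,2)] by linarith
  ultimately show ?thesis
    by simp
qed

lemma has_integral_tail_linear:
  assumes "0 \<le> a" "a < 1" "0 < \<xi>" "\<xi> \<le> 1 / 2"
  shows "((\<lambda>\<eta>. Phi0_core_integral a (inverse \<eta>)) has_integral pi\<^sup>2 / 6 - 2 * \<xi>) {\<xi>..1 / (1 - a)}"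
proof -
  have "Phi0_core_integral a (inverse \<eta>) = 2" if "\<eta> \<in> {\<xi>..1 / 2}" for \<eta>
  proof -
    have "2 \<le> inverse \<eta>"
      using that assms by (auto simp: field_simps)
    then show ?thesis
      by (simp add: Phi0_core_integral_def)
  qed
  moreover have "((\<lambda>_. 2::real) has_integral 2 * (1 / 2 - \<xi>)) {\<xi>..1 / 2}"
    using has_integral_const_real[of "2::real" \<xi> "1 / 2"] assms by (simp add: mult.commute)
  ultimately have "((\<lambda>\<eta>. Phi0_core_integral a (inverse \<eta>)) has_integral 2 * (1 / 2 - \<xi>)) {\<xi>..1 / 2}"
    using has_integral_cong by (metis (no_types, lifting))
  moreover have "1 / 2 \<le> 1 / (1 + a)" "1 / (1 + a) \<le> 1 / (1 - a)"
    using assms by (auto intro: divide_left_mono)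
  ultimately have "((\<lambda>\<eta>. Phi0_core_integral a (inverse \<eta>)) has_integral
      2 * (1 / 2 - \<xi>) + (pi\<^sup>2 / 6 - 1 + F (1 / 2) a - F (1 / 2) a)) {\<xi>..1 / (1 - a)}"
    using assms has_integral_tail_F[of a "1 / 2"] by (intro has_integral_combine) auto
  then show ?thesis
    by (simp add: algebra_simps)
qed

lemma F_abs: "F \<xi> \<bar>w\<bar> = F \<xi> w"
  by (simp add: F_def)

lemma G_abs: "G \<xi> \<bar>w\<bar> = G \<xi> w"
  by (simp add: G_def)

theorem mainTheorem2:
  fixes \<xi> w :: real
  assumes "\<xi> > 0" and "-1 < w" and "w < 1"
  shows "(\<xi> \<le> 1/2 \<longrightarrow> Phi \<xi> w = 1 - 12 / pi\<^sup>2 * \<xi>)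
       \<and> (1/2 \<le> \<xi> \<and> \<xi> \<le> 1 / (1 + \<bar>w\<bar>) \<longrightarrow>
            Phi \<xi> w = 1 + 6 / pi\<^sup>2 * (F \<xi> w - F (1/2) w - 1))
       \<and> (1 / (1 + \<bar>w\<bar>) \<le> \<xi> \<and> \<xi> \<le> 1 / (1 - \<bar>w\<bar>) \<longrightarrow>
            Phi \<xi> w = 6 / pi\<^sup>2 * (G \<xi> w - G (1 / (1 - \<bar>w\<bar>)) w))
       \<and> (1 / (1 - \<bar>w\<bar>) \<le> \<xi> \<longrightarrow> Phi \<xi> w = 0)"
proof -
  have w: "0 \<le> \<bar>w\<bar>" "\<bar>w\<bar> < 1"
    using assms by auto
  have bounds: "1 / 2 \<le> 1 / (1 + \<bar>w\<bar>)" "1 / (1 + \<bar>w\<bar>) \<le> 1 / (1 - \<bar>w\<bar>)"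
    using w by (auto intro: divide_left_mono)
  note Phi_eq = Phi_eq_tail_integral[OF w(2)]
  have "Phi \<xi> w = 6 / pi\<^sup>2 * (pi\<^sup>2 / 6 - 2 * \<xi>)" if "\<xi> \<le> 1/2"
    using has_integral_tail_linear[OF w assms(1) that]
    by (intro Phi_eq) (use that bounds in linarith, simp)
  moreover have "Phi \<xi> w = 6 / pi\<^sup>2 * (pi\<^sup>2 / 6 - 1 + F \<xi> w - F (1 / 2) w)"
    if "1/2 \<le> \<xi>" "\<xi> \<le> 1 / (1 + \<bar>w\<bar>)"
    using has_integral_tail_F[OF w that]
    by (intro Phi_eq) (use that bounds in linarith, simp add: F_abs)
  moreover have "Phi \<xi> w = 6 / pi\<^sup>2 * (G \<xi> w - G (1 / (1 - \<bar>w\<bar>)) w)"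
    if "1 / (1 + \<bar>w\<bar>) \<le> \<xi>" "\<xi> \<le> 1 / (1 - \<bar>w\<bar>)"
    using has_integral_tail_G[OF w that]
    by (intro Phi_eq) (use that in linarith, simp add: G_abs)
  ultimately show ?thesis
    using Phi_eq_0[OF w(2)] by (auto simp: field_simps)
qed

end
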